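(* Let $\mathcal{I}$ be a hereditary weak P-ideal and $\mathcal{J}$ any ideal. Then $\mathcal{J}\preceq\mathcal{I}$ if and only if $\mathcal{J}\leq_K\mathcal{I}$.
   Context: An ideal on an infinite countable set $X$ is a family $\mathcal{I}\subseteq\mathcal{P}(X)$ closed under subsets and finite unions, containing all finite subsets, with $X\notin\mathcal{I}$. $\mathcal{I}|A=\{B\cap A:B\in\mathcal{I}\}$. $\mathcal{J}\leq_K\mathcal{I}$: there is a function $f:\bigcup\mathcal{I}\to\bigcup\mathcal{J}$ with $f^{-1}[B]\in\mathcal{I}$ for all $B\in\mathcal{J}$. $\mathrm{Fin}^2$: ideal on $\omega^2$ of all $A$ with only finitely many $n$ such that $\{m:(n,m)\in A\}$ is infinite. $\mathcal{I}\sqsubseteq\mathcal{J}$: there is a bijection $f:\bigcup\mathcal{J}\to\bigcup\mathcal{I}$ with $f^{-1}[A]\in\mathcal{J}$ for all $A\in\mathcal{I}$. $\mathcal{I}$ is a hereditary weak P-ideal if $\mathrm{Fin}^2\not\sqsubseteq\mathcal{I}|A$ for every $A\notin\mathcal{I}$. $\mathrm{Fin}\otimes\emptyset$: the family of $A\subseteq\omega^2$ with $A\subseteq F\times\omega$ for some finite $F$. If $(G_{i,j})_{(i,j)\in\omega^2}$ is a partition of $\bigcup\mathcal{I}$ (pieces may be empty) into sets from $\mathcal{I}$, then $\hat{\mathcal{I}}(G_{i,j})$ is the ideal on $\omega^2$ of all $A\subseteq\omega^2$ such that every $X\subseteq\bigcup_{(i,j)\in A}G_{i,j}$ with $X\cap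 G_{i,j}$ finite for all $(i,j)\in A$ belongs to $\mathcal{I}$. $\mathcal{J}\preceq\mathcal{I}$ means: for every partition $(H_{i,j})\subseteq\mathcal{J}$ of $\bigcup\mathcal{J}$ with $\mathrm{Fin}\otimes\emptyset\subseteq\hat{\mathcal{J}}(H_{i,j})$ there is a partition $(G_{i,j})\subseteq\mathcal{I}$ of $\bigcup\mathcal{I}$ with $\hat{\mathcal{J}}(H_{i,j})\cap\mathrm{Fin}^2\subseteq\hat{\mathcal{I}}(G_{i,j})$. *)

theory Defs
  imports Main "HOL-Library.Countable_Set"
begin

text \<open>An ideal on the (infinite, countable) set X = \<Union>I.\<close>
definition is_ideal :: "'a set set \<Rightarrow> bool" where
  "is_ideal I \<longleftrightarrow>
     infinite (\<Union>I) \<and> countable (\<Union>I) \<and>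
     (\<forall>A\<in>I. \<forall>B. B \<subseteq> A \<longrightarrow> B \<in> I) \<and>
     (\<forall>A\<in>I. \<forall>B\<in>I. A \<union> B \<in> I) \<and>
     (\<forall>F. F \<subseteq> \<Union>I \<and> finite F \<longrightarrow> F \<in> I) \<and>
     \<Union>I \<notin> I"

definition restr_ideal :: "'a set set \<Rightarrow> 'a set \<Rightarrow> 'a set set" where
  "restr_ideal I A = {B \<inter> A | B. B \<in> I}"

definition katetov_le :: "'b set set \<Rightarrow> 'a set set \<Rightarrow> bool" where
  "katetov_le J I \<longleftrightarrow>
     (\<exists>f. (\<forall>x\<in>\<Union>I. f x \<in> \<Union>J) \<and> (\<forall>B\<in>J. {x\<in>\<Union>I. f x \<in> B} \<in> I))"

definition Fin2 :: "(nat \<times> nat) set set" where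
  "Fin2 = {A. finite {n. infinite {m. (n, m) \<in> A}}}"

definition Fin_times_empty :: "(nat \<times> nat) set set" where
  "Fin_times_empty = {A. \<exists>F. finite F \<and> A \<subseteq> F \<times> UNIV}"

definition sq_le :: "'a set set \<Rightarrow> 'b set set \<Rightarrow> bool" where
  "sq_le I J \<longleftrightarrow>
     (\<exists>f. bij_betw f (\<Union>J) (\<Union>I) \<and> (\<forall>A\<in>I. {x\<in>\<Union>J. f x \<in> A} \<in> J))"

definition hereditary_weak_P :: "'a set set \<Rightarrow> bool" where
  "hereditary_weak_P I \<longleftrightarrow>
     (\<forall>A. A \<subseteq> \<Union>I \<and> A \<notin> I \<longrightarrow> \<not> sq_le Fin2 (restr_ideal I A))"

text \<open>(G i j) is a partition of \<Union>I into sets from I (pieces may be empty).\<close>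
definition ideal_partition :: "'a set set \<Rightarrow> (nat \<times> nat \<Rightarrow> 'a set) \<Rightarrow> bool" where
  "ideal_partition I G \<longleftrightarrow>
     (\<forall>p. G p \<in> I) \<and> (\<forall>p q. p \<noteq> q \<longrightarrow> G p \<inter> G q = {}) \<and> (\<Union>p. G p) = \<Union>I"

definition hat_ideal :: "'a set set \<Rightarrow> (nat \<times> nat \<Rightarrow> 'a set) \<Rightarrow> (nat \<times> nat) set set" where
  "hat_ideal I G = {A. \<forall>X. X \<subseteq> (\<Union>p\<in>A. G p) \<and> (\<forall>p\<in>A. finite (X \<inter> G p)) \<longrightarrow> X \<in> I}"

definition prec_le :: "'b set set \<Rightarrow> 'a set set \<Rightarrow> bool" where
  "prec_le J I \<longleftrightarrow>
     (\<forall>H. ideal_partition J H \<and> Fin_times_empty \<subseteq> hat_ideal J H \<longrightarrow>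
        (\<exists>G. ideal_partition I G \<and> hat_ideal J H \<inter> Fin2 \<subseteq> hat_ideal I G))"

end

(*
  If f witnesses J <=_K I, pulling a partition of \<Union>J back along f gives a partition of \<Union>I
  whose hat ideal contains that of J; this direction holds for arbitrary ideals.

  Conversely, call X a selector of a disjoint family (P k) if X meets every P k in a finite set.
  For a hereditary weak P-ideal I: if (P k) is a countable disjoint family in I all of whose
  selectors lie in I, then \<Union>k. P k lies in I. Otherwise the union Y of the infinite pieces is
  not in I, and enumerating Y as \<omega> \<times> \<omega> with the infinite pieces as columns gives Fin2 \<sqsubseteq> I|Y.
  Now apply J \<preceq> I to the partition H of \<Union>J that puts the n-th point b n of \<Union>J into the cell
  (n, 0) and leaves all other cells empty. For the resulting partition G of \<Union>I the selector
  property shows that the G-union over any set in the hat ideal of H and in Fin2 is in I, and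
  also that the union W of all cells G (n, m) with m > 0 is in I. The map sending G (n, m) to b n
  is then a Katetov reduction: the preimage of B \<in> J is covered by W and the G-union over
  {(n, 0) | b n \<in> B}.
*)

theory Submission
  imports Defs "HOL-Library.Disjoint_Sets"
begin

lemma ideal_subset: "is_ideal I \<Longrightarrow> A \<in> I \<Longrightarrow> B \<subseteq> A \<Longrightarrow> B \<in> I"
  unfolding is_ideal_def by blast

lemma ideal_Un: "is_ideal I \<Longrightarrow> A \<in> I \<Longrightarrow> B \<in> I \<Longrightarrow> A \<union> B \<in> I"
  unfolding is_ideal_def by blast

lemma ideal_finite: "is_ideal I \<Longrightarrow> F \<subseteq> \<Union>I \<Longrightarrow> finite F \<Longrightarrow> F \<in> I"
  unfolding is_ideal_def by blast

lemma ideal_empty: "is_ideal I \<Longrightarrow> {} \<in> I"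
  using ideal_finite by blast

lemma countable_Union_ideal: "is_ideal I \<Longrightarrow> countable (\<Union>I)"
  unfolding is_ideal_def by blast

lemma infinite_Union_ideal: "is_ideal I \<Longrightarrow> infinite (\<Union>I)"
  unfolding is_ideal_def by blast

lemma ideal_UN_finite:
  assumes "is_ideal I" "finite F" "\<And>j. j \<in> F \<Longrightarrow> S j \<in> I"
  shows "(\<Union>j\<in>F. S j) \<in> I"
  using assms(2,3)
  by (induction F rule: finite_induct) (simp_all add: ideal_empty ideal_Un assms(1))

lemma Union_restr_ideal:
  assumes "is_ideal I" "Y \<subseteq> \<Union>I"
  shows "\<Union>(restr_ideal I Y) = Y"
proof
  show "Y \<subseteq> \<Union>(restr_ideal I Y)"
  proof
    fix y assume "y \<in> Y"
    then have "{y} \<in> I" using assms ideal_finite[of I "{y}"] by auto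
    then have "{y} \<inter> Y \<in> restr_ideal I Y" unfolding restr_ideal_def by blast
    then show "y \<in> \<Union>(restr_ideal I Y)" using \<open>y \<in> Y\<close> by blast
  qed
qed (auto simp: restr_ideal_def)

lemma Fin2I: "(\<And>n. finite {m. (n, m) \<in> A}) \<Longrightarrow> A \<in> Fin2"
  unfolding Fin2_def by simp

lemma Fin2_subset: "A \<in> Fin2 \<Longrightarrow> B \<subseteq> A \<Longrightarrow> B \<in> Fin2"
  unfolding Fin2_def by (auto elim!: rev_finite_subset intro: finite_subset)

lemma Union_Fin2: "\<Union>Fin2 = UNIV"
proof -
  have "{p} \<in> Fin2" for p
    by (rule Fin2I) (rule finite_subset[of _ "{snd p}"], auto)
  then show ?thesis by blast
qed

lemma column_in_Fin2: "{n} \<times> UNIV \<in> Fin2"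
proof -
  have "{k. infinite {m. (k, m) \<in> {n} \<times> UNIV}} \<subseteq> {n}" by auto
  then show ?thesis unfolding Fin2_def using finite_subset by blast
qed

lemma hat_idealI_Union: "is_ideal J \<Longrightarrow> (\<Union>p\<in>A. H p) \<in> J \<Longrightarrow> A \<in> hat_ideal J H"
  unfolding hat_ideal_def using ideal_subset by blast

lemma ideal_partition_iff:
  "ideal_partition I G \<longleftrightarrow> (\<forall>p. G p \<in> I) \<and> disjoint_family G \<and> (\<Union>p. G p) = \<Union>I"
  unfolding ideal_partition_def disjoint_family_on_def by blast

lemma disjoint_family_on_index_eq:
  "disjoint_family_on Q S \<Longrightarrow> i \<in> S \<Longrightarrow> j \<in> S \<Longrightarrow> x \<in> Q i \<Longrightarrow> x \<in> Q j \<Longrightarrow> i = j"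
  unfolding disjoint_family_on_def by blast

lemma the_index_disjoint_family:
  assumes "disjoint_family G" "x \<in> G p"
  shows "(THE q. x \<in> G q) = p"
  using assms by (auto simp: disjoint_family_on_def)

lemma sq_le_Fin2_restr_ideal:
  assumes I: "is_ideal I" and Y: "Y \<subseteq> \<Union>I" and \<gamma>: "bij_betw \<gamma> UNIV Y"
    and image_in_ideal: "\<And>A. A \<in> Fin2 \<Longrightarrow> \<gamma> ` A \<in> I"
  shows "sq_le Fin2 (restr_ideal I Y)"
  unfolding sq_le_def Union_Fin2 Union_restr_ideal[OF I Y]
proof (intro exI conjI ballI)
  show "bij_betw (inv_into UNIV \<gamma>) Y UNIV"
    using bij_betw_inv_into[OF \<gamma>] .
  fix A assume "A \<in> Fin2"
  have "{y \<in> Y. inv_into UNIV \<gamma> y \<in> A} = \<gamma> ` A"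
    using \<gamma> by (auto simp: bij_betw_def bij_betw_inv_into_right inv_into_f_f)
  moreover have "\<gamma> ` A = \<gamma> ` A \<inter> Y"
    using \<gamma> by (auto simp: bij_betw_def)
  ultimately show "{y \<in> Y. inv_into UNIV \<gamma> y \<in> A} \<in> restr_ideal I Y"
    using image_in_ideal[OF \<open>A \<in> Fin2\<close>] unfolding restr_ideal_def by auto
qed

lemma enumerate_disjoint_family:
  fixes Q :: "nat \<Rightarrow> 'a set"
  assumes Q: "disjoint_family Q" "\<And>j. countable (Q j)" "\<And>j. infinite (Q j)"
  obtains \<gamma> :: "nat \<times> nat \<Rightarrow> 'a" where "bij_betw \<gamma> UNIV (\<Union>j. Q j)" and "\<And>j m. \<gamma> (j, m) \<in> Q j"
proof -
  define \<gamma> where "\<gamma> = (\<lambda>(j, m). from_nat_into (Q j) m)"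
  have column: "\<gamma> (j, m) \<in> Q j" for j m
    unfolding \<gamma>_def using Q(3) by (simp add: from_nat_into infinite_imp_nonempty)
  have "inj \<gamma>"
  proof (rule injI)
    fix p q assume eq: "\<gamma> p = \<gamma> q"
    obtain j m j' m' where p: "p = (j, m)" and q: "q = (j', m')" by fastforce
    have "j = j'"
      using disjoint_family_on_index_eq[OF Q(1) UNIV_I UNIV_I column[of j m]] column[of j' m'] eq
      unfolding p q by simp
    then show "p = q" using eq Q unfolding p q \<gamma>_def by simp
  qed
  moreover have "range \<gamma> = (\<Union>j. Q j)"
  proof -
    have "range \<gamma> = (\<Union>j. range (from_nat_into (Q j)))" unfolding \<gamma>_def by auto
    also have "\<dots> = (\<Union>j. Q j)" using Q by (simp add: infinite_imp_nonempty)
    finally show ?thesis .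
  qed
  ultimately show ?thesis using column by (intro that[of \<gamma>]) (simp_all add: bij_betw_def)
qed

lemma Fin2_image_in_ideal:
  fixes Q :: "nat \<Rightarrow> 'a set"
  assumes I: "is_ideal I" and Q: "\<And>j. Q j \<in> I" "disjoint_family Q"
    and selectors: "\<And>X. X \<subseteq> (\<Union>j. Q j) \<Longrightarrow> (\<And>j. finite (X \<inter> Q j)) \<Longrightarrow> X \<in> I"
    and column: "\<And>j m. \<gamma> (j, m) \<in> Q j"
    and A: "A \<in> Fin2"
  shows "\<gamma> ` A \<in> I"
proof -
  \<comment> \<open>The finitely many infinite columns of A go into finitely many pieces, the rest onto a selector.\<close>
  define F where "F = {j. infinite {m. (j, m) \<in> A}}"
  have "finite F" using A unfolding Fin2_def F_def by simp
  have "\<gamma> ` (A \<inter> F \<times> UNIV) \<subseteq> (\<Union>j\<in>F. Q j)" using column by auto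
  moreover have "(\<Union>j\<in>F. Q j) \<in> I"
    using ideal_UN_finite[OF I \<open>finite F\<close>] Q(1) by blast
  ultimately have head: "\<gamma> ` (A \<inter> F \<times> UNIV) \<in> I"
    using ideal_subset[OF I] by blast
  have tail: "\<gamma> ` (A - F \<times> UNIV) \<in> I"
  proof (rule selectors)
    show "\<gamma> ` (A - F \<times> UNIV) \<subseteq> (\<Union>j. Q j)" using column by (auto simp: image_subset_iff)
    fix j
    have "\<gamma> ` (A - F \<times> UNIV) \<inter> Q j \<subseteq> \<gamma> ` ({j} \<times> {m. (j, m) \<in> A \<and> j \<notin> F})"
    proof
      fix x assume "x \<in> \<gamma> ` (A - F \<times> UNIV) \<inter> Q j"
      then obtain j' m where jm: "(j', m) \<in> A" "j' \<notin> F" "x = \<gamma> (j', m)" "x \<in> Q j" by auto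
      then have "j' = j" using disjoint_family_on_index_eq[OF Q(2) UNIV_I UNIV_I column[of j' m]] by blast
      then show "x \<in> \<gamma> ` ({j} \<times> {m. (j, m) \<in> A \<and> j \<notin> F})"
        using jm by (intro image_eqI[of _ _ "(j, m)"]) auto
    qed
    moreover have "finite {m. (j, m) \<in> A \<and> j \<notin> F}"
      by (cases "j \<in> F") (simp_all add: F_def)
    then have "finite (\<gamma> ` ({j} \<times> {m. (j, m) \<in> A \<and> j \<notin> F}))" by simp
    ultimately show "finite (\<gamma> ` (A - F \<times> UNIV) \<inter> Q j)"
      by (rule finite_subset)
  qed
  have "\<gamma> ` A = \<gamma> ` (A \<inter> F \<times> UNIV) \<union> \<gamma> ` (A - F \<times> UNIV)" by blast
  then show ?thesis using ideal_Un[OF I head tail] by simp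
qed

lemma Union_in_ideal_of_infinite_pieces:
  fixes Q :: "nat \<Rightarrow> 'a set"
  assumes I: "is_ideal I" and hw: "hereditary_weak_P I"
    and Q: "\<And>j. Q j \<in> I" "disjoint_family Q" "\<And>j. infinite (Q j)"
    and selectors: "\<And>X. X \<subseteq> (\<Union>j. Q j) \<Longrightarrow> (\<And>j. finite (X \<inter> Q j)) \<Longrightarrow> X \<in> I"
  shows "(\<Union>j. Q j) \<in> I"
proof (rule ccontr)
  assume notin: "(\<Union>j. Q j) \<notin> I"
  have sub: "(\<Union>j. Q j) \<subseteq> \<Union>I" using Q(1) by blast
  have countable: "countable (Q j)" for j
    using Q(1) countable_subset[OF _ countable_Union_ideal[OF I]] by blast
  obtain \<gamma> :: "nat \<times> nat \<Rightarrow> 'a"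
    where \<gamma>: "bij_betw \<gamma> UNIV (\<Union>j. Q j)" and column: "\<And>j m. \<gamma> (j, m) \<in> Q j"
    using enumerate_disjoint_family[OF Q(2) countable Q(3)] by blast
  have "sq_le Fin2 (restr_ideal I (\<Union>j. Q j))"
    by (rule sq_le_Fin2_restr_ideal[OF I sub \<gamma> Fin2_image_in_ideal[OF I Q(1,2) selectors column]])
  then show False using hw sub notin unfolding hereditary_weak_P_def by blast
qed

lemma Union_in_ideal_of_infinite_pieces_on:
  fixes G :: "'c::countable \<Rightarrow> 'a set"
  assumes I: "is_ideal I" and hw: "hereditary_weak_P I"
    and G: "\<And>p. p \<in> K \<Longrightarrow> G p \<in> I" "disjoint_family_on G K" "\<And>p. p \<in> K \<Longrightarrow> infinite (G p)"
    and selectors: "\<And>X. X \<subseteq> (\<Union>p\<in>K. G p) \<Longrightarrow> (\<And>p. p \<in> K \<Longrightarrow> finite (X \<inter> G p)) \<Longrightarrow> X \<in> I"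
  shows "(\<Union>p\<in>K. G p) \<in> I"
proof (cases "finite K")
  case True
  then show ?thesis using G(1) by (rule ideal_UN_finite[OF I])
next
  case False
  define e where "e = from_nat_into K"
  have e: "bij_betw e UNIV K"
    unfolding e_def using False by (simp add: bij_betw_from_nat_into)
  then have eK: "e j \<in> K" and range_e: "range e = K" for j
    by (auto simp: bij_betw_def)
  have "(\<Union>j. G (e j)) \<in> I"
  proof (rule Union_in_ideal_of_infinite_pieces[OF I hw])
    show "G (e j) \<in> I" "infinite (G (e j))" for j
      using eK[of j] G(1,3) by auto
    show "disjoint_family (\<lambda>j. G (e j))"
      using e G(2) by (auto simp: disjoint_family_on_def bij_betw_def inj_on_def)
  next
    fix X assume X: "X \<subseteq> (\<Union>j. G (e j))" and fin: "\<And>j. finite (X \<inter> G (e j))"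
    show "X \<in> I"
    proof (rule selectors)
      show "X \<subseteq> (\<Union>p\<in>K. G p)" using X eK by blast
      show "finite (X \<inter> G p)" if "p \<in> K" for p
        using that fin range_e by blast
    qed
  qed
  moreover have "(\<Union>j. G (e j)) = (\<Union>p\<in>K. G p)"
    using range_e by auto
  ultimately show ?thesis by simp
qed

lemma Union_in_ideal_if_selectors_in_ideal:
  fixes G :: "'c::countable \<Rightarrow> 'a set"
  assumes I: "is_ideal I" and hw: "hereditary_weak_P I"
    and G: "\<And>p. p \<in> A \<Longrightarrow> G p \<in> I" "disjoint_family_on G A"
    and selectors: "\<And>X. X \<subseteq> (\<Union>p\<in>A. G p) \<Longrightarrow> (\<And>p. p \<in> A \<Longrightarrow> finite (X \<inter> G p)) \<Longrightarrow> X \<in> I"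
  shows "(\<Union>p\<in>A. G p) \<in> I"
proof -
  define K where "K = {p \<in> A. infinite (G p)}"
  have KA: "K \<subseteq> A" by (simp add: K_def)
  have selectors_on: "X \<in> I"
    if "K' \<subseteq> A" "X \<subseteq> (\<Union>p\<in>K'. G p)" "\<And>p. p \<in> K' \<Longrightarrow> finite (X \<inter> G p)" for X K'
  proof (rule selectors)
    show "X \<subseteq> (\<Union>p\<in>A. G p)" using that(1,2) by blast
    fix p assume "p \<in> A"
    show "finite (X \<inter> G p)"
    proof (cases "p \<in> K'")
      case False
      then have "X \<inter> G p = {}"
        using that(1,2) disjoint_family_on_index_eq[OF G(2)] \<open>p \<in> A\<close> by blast
      then show ?thesis by simp
    qed (use that(3) in blast)
  qed
  have "(\<Union>p\<in>A - K. G p) \<in> I"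
    by (rule selectors_on[of "A - K"]) (auto simp: K_def)
  moreover have "(\<Union>p\<in>K. G p) \<in> I"
  proof (rule Union_in_ideal_of_infinite_pieces_on[OF I hw])
    show "disjoint_family_on G K" using disjoint_family_on_mono[OF KA G(2)] .
  qed (use G(1) KA selectors_on[OF KA] K_def in auto)
  moreover have "(\<Union>p\<in>A. G p) = (\<Union>p\<in>A - K. G p) \<union> (\<Union>p\<in>K. G p)"
    by (auto simp: K_def)
  ultimately show ?thesis using ideal_Un[OF I] by simp
qed

corollary Union_in_ideal_if_hat_ideal:
  assumes I: "is_ideal I" and hw: "hereditary_weak_P I"
    and G: "ideal_partition I G" and A: "A \<in> hat_ideal I G"
  shows "(\<Union>p\<in>A. G p) \<in> I"
proof (rule Union_in_ideal_if_selectors_in_ideal[OF I hw])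
  show "G p \<in> I" for p
    using G unfolding ideal_partition_iff by blast
  show "disjoint_family_on G A"
    using G disjoint_family_on_mono[of A UNIV G] unfolding ideal_partition_iff by blast
  show "X \<in> I" if "X \<subseteq> (\<Union>p\<in>A. G p)" "\<And>p. p \<in> A \<Longrightarrow> finite (X \<inter> G p)" for X
    using A that unfolding hat_ideal_def by blast
qed

lemma Union_in_ideal_if_Fin2_unions_in_ideal:
  fixes G :: "nat \<times> nat \<Rightarrow> 'a set"
  assumes I: "is_ideal I" and hw: "hereditary_weak_P I" and G: "disjoint_family G"
    and Fin2_unions: "\<And>A. A \<in> Fin2 \<Longrightarrow> A \<subseteq> S \<Longrightarrow> (\<Union>p\<in>A. G p) \<in> I"
  shows "(\<Union>p\<in>S. G p) \<in> I"
proof -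
  define C where "C n = (\<Union>p\<in>S \<inter> {n} \<times> UNIV. G p)" for n
  have "(\<Union>n\<in>UNIV. C n) \<in> I"
  proof (rule Union_in_ideal_if_selectors_in_ideal[OF I hw])
    show "C n \<in> I" for n
      unfolding C_def by (rule Fin2_unions) (auto intro: Fin2_subset[OF column_in_Fin2])
    show "disjoint_family_on C UNIV"
      using G unfolding C_def disjoint_family_on_def by blast
  next
    fix X assume X: "X \<subseteq> (\<Union>n\<in>UNIV. C n)" and fin: "\<And>n. n \<in> UNIV \<Longrightarrow> finite (X \<inter> C n)"
    define B where "B = {p \<in> S. G p \<inter> X \<noteq> {}}"
    have columns: "{m. (n, m) \<in> B} \<subseteq> (\<lambda>x. snd (THE p. x \<in> G p)) ` (X \<inter> C n)" for n
    proof
      fix m assume "m \<in> {m. (n, m) \<in> B}"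
      then obtain x where x: "x \<in> X" "x \<in> G (n, m)" "(n, m) \<in> S" by (auto simp: B_def)
      then have "x \<in> X \<inter> C n" by (auto simp: C_def)
      moreover have "snd (THE p. x \<in> G p) = m"
        using the_index_disjoint_family[OF G x(2)] by simp
      ultimately show "m \<in> (\<lambda>x. snd (THE p. x \<in> G p)) ` (X \<inter> C n)" by force
    qed
    have "B \<in> Fin2"
      by (rule Fin2I, rule finite_subset[OF columns finite_imageI[OF fin[OF UNIV_I]]])
    moreover have "B \<subseteq> S" by (simp add: B_def)
    moreover have "X \<subseteq> (\<Union>p\<in>B. G p)"
    proof
      fix x assume "x \<in> X"
      then obtain p where "p \<in> S" "x \<in> G p" using X by (auto simp: C_def)
      moreover from this have "p \<in> B" using \<open>x \<in> X\<close> unfolding B_def by blast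
      ultimately show "x \<in> (\<Union>p\<in>B. G p)" by blast
    qed
    ultimately show "X \<in> I"
      using ideal_subset[OF I Fin2_unions] by blast
  qed
  moreover have "(\<Union>n\<in>UNIV. C n) = (\<Union>p\<in>S. G p)"
    by (auto simp: C_def)
  ultimately show ?thesis by simp
qed

lemma ideal_partition_vimage:
  assumes f: "\<forall>x\<in>\<Union>I. f x \<in> \<Union>J" "\<forall>B\<in>J. {x\<in>\<Union>I. f x \<in> B} \<in> I"
    and H: "ideal_partition J H"
  shows "ideal_partition I (\<lambda>p. {x\<in>\<Union>I. f x \<in> H p})"
proof -
  have H_parts: "H p \<in> J" "disjoint_family H" "(\<Union>p. H p) = \<Union>J" for p
    using H unfolding ideal_partition_iff by blast+
  have "disjoint_family (\<lambda>p. {x\<in>\<Union>I. f x \<in> H p})"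
    using H_parts(2) by (rule disjoint_family_on_bisimulation) blast
  moreover have "(\<Union>p. {x\<in>\<Union>I. f x \<in> H p}) = \<Union>I"
  proof (intro equalityI subsetI)
    fix x assume "x \<in> \<Union>I"
    then obtain p where "f x \<in> H p" using f(1) H_parts(3) by blast
    then show "x \<in> (\<Union>p. {x\<in>\<Union>I. f x \<in> H p})" using \<open>x \<in> \<Union>I\<close> by blast
  qed blast
  ultimately show ?thesis
    using H_parts(1) f(2) unfolding ideal_partition_iff by blast
qed

lemma hat_ideal_vimage:
  assumes I: "is_ideal I" and f: "\<forall>B\<in>J. {x\<in>\<Union>I. f x \<in> B} \<in> I"
    and A: "A \<in> hat_ideal J H"
  shows "A \<in> hat_ideal I (\<lambda>p. {x\<in>\<Union>I. f x \<in> H p})"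
  unfolding hat_ideal_def
proof (intro CollectI allI impI)
  fix X assume X: "X \<subseteq> (\<Union>p\<in>A. {x\<in>\<Union>I. f x \<in> H p}) \<and> (\<forall>p\<in>A. finite (X \<inter> {x\<in>\<Union>I. f x \<in> H p}))"
  have "f ` X \<subseteq> (\<Union>p\<in>A. H p)" using X by blast
  moreover have "finite (f ` X \<inter> H p)" if "p \<in> A" for p
  proof -
    have "f ` X \<inter> H p \<subseteq> f ` (X \<inter> {x\<in>\<Union>I. f x \<in> H p})"
      using X by blast
    then show ?thesis using X that finite_subset by blast
  qed
  ultimately have "f ` X \<in> J" using A unfolding hat_ideal_def by blast
  then have "{x\<in>\<Union>I. f x \<in> f ` X} \<in> I" using f by blast
  moreover have "X \<subseteq> {x\<in>\<Union>I. f x \<in> f ` X}" using X by blast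
  ultimately show "X \<in> I" using ideal_subset[OF I] by blast
qed

lemma katetov_le_imp_prec_le:
  assumes I: "is_ideal I" and K: "katetov_le J I"
  shows "prec_le J I"
  unfolding prec_le_def
proof (intro allI impI)
  fix H assume "ideal_partition J H \<and> Fin_times_empty \<subseteq> hat_ideal J H"
  then have H: "ideal_partition J H" by blast
  obtain f where f: "\<forall>x\<in>\<Union>I. f x \<in> \<Union>J" "\<forall>B\<in>J. {x\<in>\<Union>I. f x \<in> B} \<in> I"
    using K unfolding katetov_le_def by blast
  show "\<exists>G. ideal_partition I G \<and> hat_ideal J H \<inter> Fin2 \<subseteq> hat_ideal I G"
    using ideal_partition_vimage[OF f H] hat_ideal_vimage[OF I f(2)] by blast
qed

lemma singletons_partition:
  fixes b :: "nat \<Rightarrow> 'b"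
  assumes J: "is_ideal J" and b: "bij_betw b UNIV (\<Union>J)"
  shows "ideal_partition J (\<lambda>p. if snd p = 0 then {b (fst p)} else {})"
    and "Fin_times_empty \<subseteq> hat_ideal J (\<lambda>p. if snd p = 0 then {b (fst p)} else {})"
proof -
  have b_in: "b n \<in> \<Union>J" for n using b by (auto simp: bij_betw_def)
  have "{b n} \<in> J" for n using ideal_finite[OF J] b_in by simp
  moreover have "disjoint_family (\<lambda>p. if snd p = 0 then {b (fst p)} else {})"
    using b by (auto simp: disjoint_family_on_def bij_betw_def inj_on_def)
  moreover have "(\<Union>p. if snd p = 0 then {b (fst p)} else {}) = \<Union>J"
  proof (intro equalityI subsetI)
    fix y assume "y \<in> \<Union>J"
    then obtain n where "y = b n" using b by (auto simp: bij_betw_def)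
    then have "y \<in> (if snd (n, 0) = 0 then {b (fst (n, 0))} else {})" by simp
    then show "y \<in> (\<Union>p. if snd p = 0 then {b (fst p)} else {})" by blast
  qed (use b_in in \<open>auto split: if_splits\<close>)
  ultimately show "ideal_partition J (\<lambda>p. if snd p = 0 then {b (fst p)} else {})"
    unfolding ideal_partition_iff by (simp add: ideal_empty[OF J])
  show "Fin_times_empty \<subseteq> hat_ideal J (\<lambda>p. if snd p = 0 then {b (fst p)} else {})"
  proof
    fix A assume "A \<in> Fin_times_empty"
    then obtain F where F: "finite F" "A \<subseteq> F \<times> UNIV" unfolding Fin_times_empty_def by blast
    then have "(\<Union>p\<in>A. if snd p = 0 then {b (fst p)} else {}) \<subseteq> b ` F" by auto
    moreover have "b ` F \<in> J" using b_in F(1) by (intro ideal_finite[OF J]) auto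
    ultimately show "A \<in> hat_ideal J (\<lambda>p. if snd p = 0 then {b (fst p)} else {})"
      using hat_idealI_Union[OF J] ideal_subset[OF J] by blast
  qed
qed

lemma katetov_le_of_column_partition:
  fixes G :: "nat \<times> nat \<Rightarrow> 'a set" and b :: "nat \<Rightarrow> 'b"
  assumes I: "is_ideal I" and G: "ideal_partition I G" and b: "\<And>n. b n \<in> \<Union>J"
    and off_column: "(\<Union>p\<in>{p. snd p \<noteq> 0}. G p) \<in> I"
    and column: "\<And>B. B \<in> J \<Longrightarrow> (\<Union>p\<in>{p. snd p = 0 \<and> b (fst p) \<in> B}. G p) \<in> I"
  shows "katetov_le J I"
proof -
  have G_disjoint: "disjoint_family G" and G_cover: "(\<Union>p. G p) = \<Union>I"
    using G unfolding ideal_partition_iff by blast+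
  define f where "f x = b (fst (THE p. x \<in> G p))" for x
  show ?thesis
    unfolding katetov_le_def
  proof (intro exI conjI ballI)
    show "f x \<in> \<Union>J" for x unfolding f_def by (rule b)
  next
    fix B assume "B \<in> J"
    have "{x \<in> \<Union>I. f x \<in> B} \<subseteq>
        (\<Union>p\<in>{p. snd p = 0 \<and> b (fst p) \<in> B}. G p) \<union> (\<Union>p\<in>{p. snd p \<noteq> 0}. G p)"
    proof
      fix x assume x: "x \<in> {x \<in> \<Union>I. f x \<in> B}"
      then obtain n m where nm: "x \<in> G (n, m)" using G_cover by fast
      then have "f x = b n" unfolding f_def using the_index_disjoint_family[OF G_disjoint] by simp
      then have "(n, m) \<in> {p. snd p = 0 \<and> b (fst p) \<in> B} \<union> {p. snd p \<noteq> 0}"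
        using x by auto
      then show "x \<in> (\<Union>p\<in>{p. snd p = 0 \<and> b (fst p) \<in> B}. G p) \<union> (\<Union>p\<in>{p. snd p \<noteq> 0}. G p)"
        using nm by blast
    qed
    then show "{x \<in> \<Union>I. f x \<in> B} \<in> I"
      by (rule ideal_subset[OF I ideal_Un[OF I column[OF \<open>B \<in> J\<close>] off_column]])
  qed
qed

lemma prec_le_imp_katetov_le:
  assumes I: "is_ideal I" and hw: "hereditary_weak_P I" and J: "is_ideal J"
    and prec: "prec_le J I"
  shows "katetov_le J I"
proof -
  define b where "b = from_nat_into (\<Union>J)"
  have b: "bij_betw b UNIV (\<Union>J)"
    unfolding b_def using countable_Union_ideal[OF J] infinite_Union_ideal[OF J]
    by (rule bij_betw_from_nat_into)
  define H :: "nat \<times> nat \<Rightarrow> 'b set" where "H p = (if snd p = 0 then {b (fst p)} else {})" for p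
  obtain G where G: "ideal_partition I G" and GH: "hat_ideal J H \<inter> Fin2 \<subseteq> hat_ideal I G"
    using prec singletons_partition[OF J b] unfolding prec_le_def H_def by blast
  have transfer: "(\<Union>p\<in>A. G p) \<in> I" if "A \<in> Fin2" "(\<Union>p\<in>A. H p) \<in> J" for A
  proof -
    have "A \<in> hat_ideal J H" by (rule hat_idealI_Union[OF J that(2)])
    then have "A \<in> hat_ideal I G" using GH that(1) by blast
    then show ?thesis by (rule Union_in_ideal_if_hat_ideal[OF I hw G])
  qed
  have G_disjoint: "disjoint_family G"
    using G unfolding ideal_partition_iff by blast
  show ?thesis
  proof (rule katetov_le_of_column_partition[OF I G])
    show "b n \<in> \<Union>J" for n using b by (auto simp: bij_betw_def)
    show "(\<Union>p\<in>{p. snd p \<noteq> 0}. G p) \<in> I"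
    proof (rule Union_in_ideal_if_Fin2_unions_in_ideal[OF I hw G_disjoint])
      fix A assume "A \<in> Fin2" "A \<subseteq> {p. snd p \<noteq> 0}"
      moreover from this have "(\<Union>p\<in>A. H p) = {}" by (auto simp: H_def)
      ultimately show "(\<Union>p\<in>A. G p) \<in> I" using transfer ideal_empty[OF J] by simp
    qed
  next
    fix B assume "B \<in> J"
    define A :: "(nat \<times> nat) set" where "A = {p. snd p = 0 \<and> b (fst p) \<in> B}"
    have "A \<in> Fin2" by (rule Fin2I, rule finite_subset[of _ "{0}"]) (auto simp: A_def)
    moreover have "(\<Union>p\<in>A. H p) \<subseteq> B" by (auto simp: A_def H_def)
    then have "(\<Union>p\<in>A. H p) \<in> J" by (rule ideal_subset[OF J \<open>B \<in> J\<close>])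
    ultimately show "(\<Union>p\<in>A. G p) \<in> I" by (rule transfer)
  qed
qed

theorem proposition8p5:
  fixes I :: "'a set set" and J :: "'b set set"
  assumes "is_ideal I" and "hereditary_weak_P I" and "is_ideal J"
  shows "prec_le J I \<longleftrightarrow> katetov_le J I"
  using prec_le_imp_katetov_le[OF assms] katetov_le_imp_prec_le[OF assms(1)] by blast

end
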